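(* Let $1\le q\le k$, $n\ge 2$, $f\in P_1^{k,q}$, $a\in E_k$ with $\gcd(a,k)=1$, $b_1,\dots,b_n\in E_k$, $g_i(x_i)=[a\,f(x_i)+b_i]\bmod k$ for $i=1,\dots,n$, and $h(x_1,\dots,x_n)=[g_1(x_1)+\dots+g_n(x_n)]\bmod k$. Let $1<t\le n$ with $\gcd(t,k)=1$. Then identifying any $t$ distinct variables of $h$ (substituting one common variable $z$ — new or one of them — for all of them) yields, as a function of $z$ and the remaining $n-t$ variables, an $H(q)$-function belonging to $P_{n-t+1}^k$.
   Context: $E_k=\{0,1,\dots,k-1\}$, $k\ge 2$, with arithmetic modulo $k$. $P_m^k$ is the set of all functions $E_k^m\to E_k$; $P_1^{k,q}$ is the set of functions $E_k\to E_k$ taking exactly $q$ distinct values. For a variable $x$ of a function $g$, $\mathrm{Spr}(x,g)$ is the set of numbers of distinct values of all one-variable functions obtained from $g$ by fixing all variables other than $x$ to constants (for a function of the single variable $x$, this is $\{$number of its distinct values$\}$). A function $g$ is an $H(q)$-function if $\mathrm{Spr}(x,g)=\{q\}$ for every variable $x$ of $g$. *)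

theory Defs
  imports Main
begin

text \<open>A function of m variables over E_k = {0..<k} is modelled as
  g :: (nat \<Rightarrow> nat) \<Rightarrow> nat, applied to an argument vector x whose
  components x 0, ..., x (m-1) are the variables (only these are read).\<close>

definition in_P :: "nat \<Rightarrow> nat \<Rightarrow> ((nat \<Rightarrow> nat) \<Rightarrow> nat) \<Rightarrow> bool" where
  "in_P k m g \<longleftrightarrow> (\<forall>x. (\<forall>j<m. x j < k) \<longrightarrow> g x < k)"

definition Spr :: "nat \<Rightarrow> nat \<Rightarrow> ((nat \<Rightarrow> nat) \<Rightarrow> nat) \<Rightarrow> nat \<Rightarrow> nat set" where
  "Spr k m g i = {card ((\<lambda>c. g (x(i := c))) ` {..<k}) | x. \<forall>j<m. x j < k}"

definition is_H :: "nat \<Rightarrow> nat \<Rightarrow> nat \<Rightarrow> ((nat \<Rightarrow> nat) \<Rightarrow> nat) \<Rightarrow> bool" where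
  "is_H k m q g \<longleftrightarrow> (\<forall>i<m. Spr k m g i = {q})"

text \<open>Identification of the variables with indices in S (subset of {0..<n}) of an
  n-ary function h: the result has variable 0 = the common variable z, and
  variable j+1 = the (j+1)-th smallest index of {0..<n} - S.\<close>
definition identify :: "nat \<Rightarrow> nat set \<Rightarrow> ((nat \<Rightarrow> nat) \<Rightarrow> nat) \<Rightarrow> (nat \<Rightarrow> nat) \<Rightarrow> nat" where
  "identify n S h y = h (\<lambda>i. if i \<in> S then y 0
       else y (Suc (card {j \<in> {0..<n} - S. j < i})))"

end

theory Submission
  imports Defs "HOL-Number_Theory.Cong"
begin

text \<open>
  After identifying the
  variables in \<open>S\<close> (with \<open>|S| = t\<close>) to a common variable \<open>z\<close>, every one-variable
  section of the resulting function \<open>G\<close> has the affine shape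
  \<open>c \<mapsto> (A f(c) + C) mod k\<close>: for the variable \<open>z\<close> one gets \<open>A = t a\<close>, for each
  remaining variable \<open>A = a\<close>.  Both multipliers are coprime to \<open>k\<close>, and
  \<open>u \<mapsto> (A u + C) mod k\<close> is injective on \<open>E_k\<close> for such \<open>A\<close>, so every section takes
  exactly as many values as \<open>f\<close>, namely \<open>q\<close>.
\<close>

lemma inj_on_affine_mod:
  fixes A C k :: nat
  assumes "coprime A k"
  shows "inj_on (\<lambda>u. (A * u + C) mod k) {..<k}"
proof (rule inj_onI)
  fix u v assume uv: "u \<in> {..<k}" "v \<in> {..<k}" "(A * u + C) mod k = (A * v + C) mod k"
  then have "[A * u + C = A * v + C] (mod k)" by (simp add: cong_def)
  then have "[A * u = A * v] (mod k)" by (simp add: cong_add_rcancel_nat)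
  then have "[u = v] (mod k)" using assms by (simp add: cong_mult_lcancel_nat)
  then show "u = v" using uv(1,2) cong_less_imp_eq_nat by auto
qed

lemma card_image_affine_mod:
  fixes A C k :: nat and f :: "nat \<Rightarrow> nat" and D :: "nat set"
  assumes "coprime A k" and "f ` D \<subseteq> {..<k}"
  shows "card ((\<lambda>c. (A * f c + C) mod k) ` D) = card (f ` D)"
proof -
  have "(\<lambda>c. (A * f c + C) mod k) ` D = (\<lambda>u. (A * u + C) mod k) ` (f ` D)"
    by (simp add: image_image)
  moreover have "inj_on (\<lambda>u. (A * u + C) mod k) (f ` D)"
    using inj_on_affine_mod[OF assms(1)] assms(2) by (rule inj_on_subset)
  ultimately show ?thesis by (simp add: card_image)
qed

lemma is_H_of_affine_sections:
  fixes k m q :: nat and f :: "nat \<Rightarrow> nat" and G :: "(nat \<Rightarrow> nat) \<Rightarrow> nat"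
  assumes "0 < k" and f_range: "\<forall>x<k. f x < k" and f_q: "card (f ` {..<k}) = q"
    and affine: "\<And>i x. i < m \<Longrightarrow>
                   \<exists>A C. coprime A k \<and> (\<forall>c. G (x(i := c)) = (A * f c + C) mod k)"
  shows "is_H k m q G"
  unfolding is_H_def Spr_def
proof (intro allI impI)
  fix i assume i: "i < m"
  have section_card: "card ((\<lambda>c. G (x(i := c))) ` {..<k}) = q" for x
  proof -
    obtain A C where "coprime A k" and G_x: "\<forall>c. G (x(i := c)) = (A * f c + C) mod k"
      using affine[OF i] by blast
    moreover have "f ` {..<k} \<subseteq> {..<k}" using f_range by auto
    ultimately show ?thesis using f_q card_image_affine_mod by simp
  qed
  have "\<exists>x :: nat \<Rightarrow> nat. \<forall>j<m. x j < k" using \<open>0 < k\<close> by auto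
  then show "{card ((\<lambda>c. G (x(i := c))) ` {..<k}) | x. \<forall>j<m. x j < k} = {q}"
    using section_card by auto
qed

lemma sum_split_parameter:
  fixes a :: nat and f b :: "nat \<Rightarrow> nat" and X :: "nat \<Rightarrow> nat \<Rightarrow> nat"
  assumes "finite I" "S \<subseteq> I"
    and on_S: "\<And>c j. j \<in> S \<Longrightarrow> X c j = c"
    and off_S: "\<And>c j. j \<in> I - S \<Longrightarrow> X c j = Y j"
  shows "(\<Sum>j\<in>I. a * f (X c j) + b j)
           = card S * a * f c + ((\<Sum>j\<in>S. b j) + (\<Sum>j\<in>I - S. a * f (Y j) + b j))"
proof -
  have "(\<Sum>j\<in>I. a * f (X c j) + b j)
          = (\<Sum>j\<in>S. a * f (X c j) + b j) + (\<Sum>j\<in>I - S. a * f (X c j) + b j)"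
    using assms(1,2) by (simp add: sum.subset_diff)
  also have "(\<Sum>j\<in>S. a * f (X c j) + b j) = card S * a * f c + (\<Sum>j\<in>S. b j)"
    using on_S by (simp add: sum.distrib)
  also have "(\<Sum>j\<in>I - S. a * f (X c j) + b j) = (\<Sum>j\<in>I - S. a * f (Y j) + b j)"
    using off_S by simp
  finally show ?thesis by simp
qed

text \<open>Numbering the elements of a finite set \<open>R\<close> by the number of smaller elements is
  a bijection onto \<open>{..<card R}\<close>; \<open>identify\<close> numbers the surviving variables this way.\<close>
lemma rank_bij_betw:
  fixes R :: "nat set"
  assumes "finite R"
  shows "bij_betw (\<lambda>i. card {j \<in> R. j < i}) R {..<card R}"
proof -
  let ?r = "\<lambda>i. card {j \<in> R. j < i}"
  have mono: "?r i < ?r i'" if "i \<in> R" "i < i'" for i i'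
    using that assms by (intro psubset_card_mono) auto
  have inj: "inj_on ?r R"
  proof (rule inj_onI)
    fix i i' assume "i \<in> R" "i' \<in> R" "?r i = ?r i'"
    then show "i = i'" using mono[of i i'] mono[of i' i] by (cases i i' rule: linorder_cases) auto
  qed
  have "?r ` R \<subseteq> {..<card R}"
    using assms by (auto intro!: psubset_card_mono)
  moreover have "card (?r ` R) = card R" using inj by (simp add: card_image)
  ultimately have "?r ` R = {..<card R}" by (simp add: card_subset_eq)
  then show ?thesis using inj by (simp add: bij_betw_def)
qed

lemma identify_separable_section:
  fixes n k a :: nat and f b :: "nat \<Rightarrow> nat" and h :: "(nat \<Rightarrow> nat) \<Rightarrow> nat"
  assumes S: "S \<subseteq> {..<n}"
    and h_sum: "\<And>X. h X = (\<Sum>j<n. a * f (X j) + b j) mod k"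
    and i: "i < n - card S + 1"
  shows "\<exists>A C. (A = card S * a \<or> A = a) \<and>
           (\<forall>c. identify n S h (x(i := c)) = (A * f c + C) mod k)"
proof -
  define R where "R = {0..<n} - S"
  define r where "r = (\<lambda>i. card {j \<in> R. j < i})"
  define X where "X c j = (if j \<in> S then (x(i := c)) 0 else (x(i := c)) (Suc (r j)))"
    for c j
  have G_X: "identify n S h (x(i := c)) = (\<Sum>j<n. a * f (X c j) + b j) mod k" for c
    unfolding identify_def X_def r_def R_def by (simp add: h_sum)
  show ?thesis
  proof (cases i)
    case 0
    have "X c j = c" if "j \<in> S" for c j using that 0 by (simp add: X_def)
    moreover have "X c j = x (Suc (r j))" if "j \<in> {..<n} - S" for c j
      using that 0 by (simp add: X_def)
    ultimately show ?thesis
      using S by (subst G_X, subst sum_split_parameter[where Y = "\<lambda>j. x (Suc (r j))"]) auto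
  next
    case (Suc p)
    have "card R = n - card S"
      using S by (simp add: R_def atLeast0LessThan card_Diff_subset finite_subset)
    then have "bij_betw r R {..<n - card S}" using rank_bij_betw[of R] by (simp add: R_def r_def)
    moreover have "p < n - card S" using i Suc by simp
    ultimately obtain i0 where i0: "i0 \<in> R" "r i0 = p" and
      rank_unique: "\<And>j. j \<in> R \<Longrightarrow> r j = p \<Longrightarrow> j = i0"
      by (metis bij_betw_def bij_betw_inv_into_right inj_on_contraD inv_into_into lessThan_iff)
    have "X c i0 = c" for c using i0 Suc by (simp add: X_def R_def)
    moreover have "X c j = (if j \<in> S then x 0 else x (Suc (r j)))"
      if "j \<in> {..<n} - {i0}" for c j
      using that rank_unique Suc by (auto simp: X_def R_def)
    ultimately show ?thesis
      using i0 by (subst G_X, subst sum_split_parameter[where S = "{i0}"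
          and Y = "\<lambda>j. if j \<in> S then x 0 else x (Suc (r j))"]) (auto simp: R_def)
  qed
qed

theorem corollary2p9:
  fixes k q n t a :: nat and f :: "nat \<Rightarrow> nat" and b :: "nat \<Rightarrow> nat"
    and g :: "nat \<Rightarrow> nat \<Rightarrow> nat" and h :: "(nat \<Rightarrow> nat) \<Rightarrow> nat"
    and S :: "nat set"
  assumes k: "k \<ge> 2" and q: "1 \<le> q" "q \<le> k" and n: "n \<ge> 2"
    and f_range: "\<forall>x<k. f x < k" and f_q: "card (f ` {..<k}) = q"
    and a: "a < k" "coprime a k"
    and b: "\<forall>i<n. b i < k"
    and g_def: "\<forall>i x. g i x = (a * f x + b i) mod k"
    and h_def: "\<forall>x. h x = (\<Sum>i<n. g i (x i)) mod k"
    and t: "1 < t" "t \<le> n" "coprime t k"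
    and S: "S \<subseteq> {..<n}" "card S = t"
  shows "is_H k (n - t + 1) q (identify n S h) \<and> in_P k (n - t + 1) (identify n S h)"
proof
  have h_sum: "h X = (\<Sum>j<n. a * f (X j) + b j) mod k" for X
    by (simp add: h_def g_def mod_sum_eq)
  have "\<exists>A C. coprime A k \<and> (\<forall>c. identify n S h (x(i := c)) = (A * f c + C) mod k)"
    if "i < n - t + 1" for i x
  proof -
    have "i < n - card S + 1" using that S(2) by simp
    then have "\<exists>A C. (A = t * a \<or> A = a) \<and>
                 (\<forall>c. identify n S h (x(i := c)) = (A * f c + C) mod k)"
      using identify_separable_section[OF S(1) h_sum] S(2) by simp
    then obtain A C where "A = t * a \<or> A = a"
      and "\<forall>c. identify n S h (x(i := c)) = (A * f c + C) mod k" by blast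
    moreover have "coprime (t * a) k" using a(2) t(3) by simp
    ultimately show ?thesis using a(2) by blast
  qed
  then show "is_H k (n - t + 1) q (identify n S h)"
    using k f_range f_q by (intro is_H_of_affine_sections) auto
  show "in_P k (n - t + 1) (identify n S h)"
    using k by (simp add: in_P_def identify_def h_sum)
qed

end
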